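(* Let $T$ be a near-truss and let $I$ be a paragon in $T$ that is a maximal left ideal. Then the quotient near-truss $T/I$ has no ideals other than singleton sets and $T/I$ itself.
   Context: A heap is a set with a ternary operation $[-,-,-]$ satisfying $[a_1,a_2,[a_3,a_4,a_5]]=[[a_1,a_2,a_3],a_4,a_5]$ and $[a,a,b]=b=[b,a,a]$. A near-truss is a heap with an associative multiplication satisfying $a[b,c,d]=[ab,ac,ad]$. A normal sub-heap is a non-empty subset $S$ closed under $[-,-,-]$ with $[[a,e,s],a,e]\in S$ for all $a$ and $e,s\in S$; $a\sim_S b$ iff $[a,b,s]\in S$ for some (equivalently all) $s\in S$. A sub-heap $S$ is closed if $[ts',ts,s]\in S$ and $[s't,st,s]\in S$ for all $s,s'\in S$, $t$. A paragon is a non-empty normal sub-heap $P$ all of whose $\sim_P$-classes are closed; then $T/P$ is a near-truss with $\bar a\bar b=\overline{ab}$. A left ideal is a normal sub-heap $I$ with $ti\in I$ for all $t$, $i\in I$; an ideal additionally satisfies $it\in I$. A left ideal $I\neq T$ is maximal if it is not contained in any left ideal other than itself and $T$. *)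

theory Defs
  imports Main
begin

definition heap :: "'a set \<Rightarrow> ('a \<Rightarrow> 'a \<Rightarrow> 'a \<Rightarrow> 'a) \<Rightarrow> bool" where
  "heap T h \<longleftrightarrow>
     (\<forall>a\<in>T. \<forall>b\<in>T. \<forall>c\<in>T. h a b c \<in> T) \<and>
     (\<forall>a1\<in>T. \<forall>a2\<in>T. \<forall>a3\<in>T. \<forall>a4\<in>T. \<forall>a5\<in>T.
        h a1 a2 (h a3 a4 a5) = h (h a1 a2 a3) a4 a5) \<and>
     (\<forall>a\<in>T. \<forall>b\<in>T. h a a b = b \<and> h b a a = b)"

definition near_truss :: "'a set \<Rightarrow> ('a \<Rightarrow> 'a \<Rightarrow> 'a \<Rightarrow> 'a) \<Rightarrow> ('a \<Rightarrow> 'a \<Rightarrow> 'a) \<Rightarrow> bool" where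
  "near_truss T h m \<longleftrightarrow> heap T h \<and>
     (\<forall>a\<in>T. \<forall>b\<in>T. m a b \<in> T) \<and>
     (\<forall>a\<in>T. \<forall>b\<in>T. \<forall>c\<in>T. m (m a b) c = m a (m b c)) \<and>
     (\<forall>a\<in>T. \<forall>b\<in>T. \<forall>c\<in>T. \<forall>d\<in>T. m a (h b c d) = h (m a b) (m a c) (m a d))"

definition subheap :: "'a set \<Rightarrow> ('a \<Rightarrow> 'a \<Rightarrow> 'a \<Rightarrow> 'a) \<Rightarrow> 'a set \<Rightarrow> bool" where
  "subheap T h S \<longleftrightarrow> S \<noteq> {} \<and> S \<subseteq> T \<and> (\<forall>a\<in>S. \<forall>b\<in>S. \<forall>c\<in>S. h a b c \<in> S)"

definition normal_subheap :: "'a set \<Rightarrow> ('a \<Rightarrow> 'a \<Rightarrow> 'a \<Rightarrow> 'a) \<Rightarrow> 'a set \<Rightarrow> bool" where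
  "normal_subheap T h S \<longleftrightarrow> subheap T h S \<and>
     (\<forall>a\<in>T. \<forall>e\<in>S. \<forall>s\<in>S. h (h a e s) a e \<in> S)"

definition heap_rel :: "'a set \<Rightarrow> ('a \<Rightarrow> 'a \<Rightarrow> 'a \<Rightarrow> 'a) \<Rightarrow> 'a set \<Rightarrow> ('a \<times> 'a) set" where
  "heap_rel T h S = {(a, b). a \<in> T \<and> b \<in> T \<and> (\<exists>s\<in>S. h a b s \<in> S)}"

definition hclass :: "'a set \<Rightarrow> ('a \<Rightarrow> 'a \<Rightarrow> 'a \<Rightarrow> 'a) \<Rightarrow> 'a set \<Rightarrow> 'a \<Rightarrow> 'a set" where
  "hclass T h S a = heap_rel T h S `` {a}"

definition closed_subheap :: "'a set \<Rightarrow> ('a \<Rightarrow> 'a \<Rightarrow> 'a \<Rightarrow> 'a) \<Rightarrow> ('a \<Rightarrow> 'a \<Rightarrow> 'a) \<Rightarrow> 'a set \<Rightarrow> bool" where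
  "closed_subheap T h m S \<longleftrightarrow> subheap T h S \<and>
     (\<forall>s\<in>S. \<forall>s'\<in>S. \<forall>t\<in>T. h (m t s') (m t s) s \<in> S \<and> h (m s' t) (m s t) s \<in> S)"

definition paragon :: "'a set \<Rightarrow> ('a \<Rightarrow> 'a \<Rightarrow> 'a \<Rightarrow> 'a) \<Rightarrow> ('a \<Rightarrow> 'a \<Rightarrow> 'a) \<Rightarrow> 'a set \<Rightarrow> bool" where
  "paragon T h m P \<longleftrightarrow> normal_subheap T h P \<and>
     (\<forall>a\<in>T. closed_subheap T h m (hclass T h P a))"

definition left_ideal :: "'a set \<Rightarrow> ('a \<Rightarrow> 'a \<Rightarrow> 'a \<Rightarrow> 'a) \<Rightarrow> ('a \<Rightarrow> 'a \<Rightarrow> 'a) \<Rightarrow> 'a set \<Rightarrow> bool" where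
  "left_ideal T h m I \<longleftrightarrow> normal_subheap T h I \<and> (\<forall>t\<in>T. \<forall>i\<in>I. m t i \<in> I)"

definition ideal :: "'a set \<Rightarrow> ('a \<Rightarrow> 'a \<Rightarrow> 'a \<Rightarrow> 'a) \<Rightarrow> ('a \<Rightarrow> 'a \<Rightarrow> 'a) \<Rightarrow> 'a set \<Rightarrow> bool" where
  "ideal T h m I \<longleftrightarrow> left_ideal T h m I \<and> (\<forall>t\<in>T. \<forall>i\<in>I. m i t \<in> I)"

definition maximal_left_ideal :: "'a set \<Rightarrow> ('a \<Rightarrow> 'a \<Rightarrow> 'a \<Rightarrow> 'a) \<Rightarrow> ('a \<Rightarrow> 'a \<Rightarrow> 'a) \<Rightarrow> 'a set \<Rightarrow> bool" where
  "maximal_left_ideal T h m I \<longleftrightarrow> left_ideal T h m I \<and> I \<noteq> T \<and>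
     (\<forall>J. left_ideal T h m J \<and> I \<subseteq> J \<longrightarrow> J = I \<or> J = T)"

text \<open>Quotient T/P: carrier is the set of \<open>\<sim>_P\<close>-classes; operations act on
(arbitrary chosen) representatives, which is well defined when P is a paragon.\<close>

definition qcarrier :: "'a set \<Rightarrow> ('a \<Rightarrow> 'a \<Rightarrow> 'a \<Rightarrow> 'a) \<Rightarrow> 'a set \<Rightarrow> 'a set set" where
  "qcarrier T h P = T // heap_rel T h P"

definition qrep :: "'a set \<Rightarrow> 'a" where
  "qrep A = (SOME a. a \<in> A)"

definition qheap :: "'a set \<Rightarrow> ('a \<Rightarrow> 'a \<Rightarrow> 'a \<Rightarrow> 'a) \<Rightarrow> 'a set \<Rightarrow>
    'a set \<Rightarrow> 'a set \<Rightarrow> 'a set \<Rightarrow> 'a set" where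
  "qheap T h P A B C = hclass T h P (h (qrep A) (qrep B) (qrep C))"

definition qmult :: "'a set \<Rightarrow> ('a \<Rightarrow> 'a \<Rightarrow> 'a \<Rightarrow> 'a) \<Rightarrow> ('a \<Rightarrow> 'a \<Rightarrow> 'a) \<Rightarrow> 'a set \<Rightarrow>
    'a set \<Rightarrow> 'a set \<Rightarrow> 'a set" where
  "qmult T h m P A B = hclass T h P (m (qrep A) (qrep B))"

end

theory Submission
  imports Defs
begin

text \<open>Let \<open>J\<close> be a left ideal of \<open>T/I\<close> and \<open>K\<close> its preimage in \<open>T\<close>, a left ideal that is a
union of \<open>\<sim>\<^sub>I\<close>-classes. Fix \<open>x \<in> K\<close> and \<open>e \<in> I\<close>, and let \<open>N\<close> be the preimage of \<open>K\<close> under the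
heap automorphism \<open>t \<mapsto> [t,e,x]\<close> of \<open>T\<close>, which maps \<open>e\<close> to \<open>x\<close>. \<open>N\<close> contains \<open>I\<close>, since
\<open>[i,e,x] \<sim>\<^sub>I x\<close> for \<open>i \<in> I\<close>; as moreover \<open>te \<in> I\<close> for all \<open>t\<close>, \<open>N\<close> is again a left ideal.
By maximality either \<open>N = I\<close>, and then \<open>K\<close> is the class of \<open>x\<close>, so \<open>J\<close> is a singleton; or
\<open>N = T\<close>, and then \<open>K = T\<close>, so \<open>J = T/I\<close>.\<close>

locale heap_carrier =
  fixes T :: "'a set" and h :: "'a \<Rightarrow> 'a \<Rightarrow> 'a \<Rightarrow> 'a"
  assumes heap: "heap T h"
begin

lemma heap_closed [simp]: "a \<in> T \<Longrightarrow> b \<in> T \<Longrightarrow> c \<in> T \<Longrightarrow> h a b c \<in> T"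
  using heap unfolding heap_def by blast

lemma heap_cancel_left [simp]: "a \<in> T \<Longrightarrow> b \<in> T \<Longrightarrow> h a a b = b"
  using heap unfolding heap_def by blast

lemma heap_cancel_right [simp]: "a \<in> T \<Longrightarrow> b \<in> T \<Longrightarrow> h b a a = b"
  using heap unfolding heap_def by blast

lemma heap_assoc [simp]:
  "a \<in> T \<Longrightarrow> b \<in> T \<Longrightarrow> c \<in> T \<Longrightarrow> d \<in> T \<Longrightarrow> e \<in> T \<Longrightarrow> h a b (h c d e) = h (h a b c) d e"
  using heap unfolding heap_def by blast

lemma heap_cancel_inner [simp]:
  "a \<in> T \<Longrightarrow> b \<in> T \<Longrightarrow> c \<in> T \<Longrightarrow> x \<in> T \<Longrightarrow> h (h x b a) a c = h x b c"
  using heap_assoc[of x b a a c] by simp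

lemma heap_swap_middle [simp]:
  assumes "a \<in> T" "b \<in> T" "c \<in> T" "d \<in> T" "e \<in> T"
  shows "h a (h b c d) e = h (h a d c) b e"
proof -
  let ?y = "h b c d"
  have "h ?y d (h c b e) = h b c (h c b e)"
    using assms heap_assoc[of b c d d "h c b e"] by simp
  also have "\<dots> = e"
    using assms by simp
  finally have y_cancel: "h ?y d (h c b e) = e" .
  have "h a ?y e = h a ?y (h ?y d (h c b e))"
    by (simp only: y_cancel)
  also have "\<dots> = h (h a ?y ?y) d (h c b e)"
    using assms by (intro heap_assoc) simp_all
  also have "\<dots> = h (h a d c) b e"
    using assms by simp
  finally show ?thesis .
qed

lemma normal_subheap_translate:
  assumes K: "normal_subheap T h K" and "x \<in> K" "e \<in> T"
  shows "normal_subheap T h {t \<in> T. h t e x \<in> K}"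
proof -
  have "K \<subseteq> T" and K_closed: "\<And>a b c. a \<in> K \<Longrightarrow> b \<in> K \<Longrightarrow> c \<in> K \<Longrightarrow> h a b c \<in> K"
    and K_normal: "\<And>t a b. t \<in> T \<Longrightarrow> a \<in> K \<Longrightarrow> b \<in> K \<Longrightarrow> h (h t a b) t a \<in> K"
    using K unfolding normal_subheap_def subheap_def by blast+
  with assms have x: "x \<in> T"
    by blast
  show ?thesis
    unfolding normal_subheap_def subheap_def
  proof (intro conjI ballI)
    show "{t \<in> T. h t e x \<in> K} \<noteq> {}"
      using assms x by auto
  next
    fix a b c assume "a \<in> {t \<in> T. h t e x \<in> K}" "b \<in> {t \<in> T. h t e x \<in> K}" "c \<in> {t \<in> T. h t e x \<in> K}"
    with K_closed have "h (h a e x) (h b e x) (h c e x) \<in> K" and "a \<in> T" "b \<in> T" "c \<in> T"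
      by blast+
    with assms x show "h a b c \<in> {t \<in> T. h t e x \<in> K}"
      by simp
  next
    fix t a b assume "t \<in> T" "a \<in> {t \<in> T. h t e x \<in> K}" "b \<in> {t \<in> T. h t e x \<in> K}"
    with K_normal[of "h t e x" "h a e x" "h b e x"] assms x
    show "h (h t a b) t a \<in> {t \<in> T. h t e x \<in> K}"
      by simp
  qed auto
qed

end

locale normal_subheap_in = heap_carrier +
  fixes S :: "'a set"
  assumes normal_subheap: "normal_subheap T h S"
begin

abbreviation sim :: "('a \<times> 'a) set" where
  "sim \<equiv> heap_rel T h S"

abbreviation cls :: "'a \<Rightarrow> 'a set" where
  "cls \<equiv> hclass T h S"

lemma subheap_subset: "S \<subseteq> T"
  and subheap_nonempty: "S \<noteq> {}"
  and subheap_closed: "a \<in> S \<Longrightarrow> b \<in> S \<Longrightarrow> c \<in> S \<Longrightarrow> h a b c \<in> S"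
  and subheap_normal: "t \<in> T \<Longrightarrow> a \<in> S \<Longrightarrow> b \<in> S \<Longrightarrow> h (h t a b) t a \<in> S"
  using normal_subheap unfolding normal_subheap_def subheap_def by blast+

lemma heap_relI: "a \<in> T \<Longrightarrow> b \<in> T \<Longrightarrow> s \<in> S \<Longrightarrow> h a b s \<in> S \<Longrightarrow> (a, b) \<in> sim"
  unfolding heap_rel_def by blast

lemma heap_relD: "(a, b) \<in> sim \<Longrightarrow> a \<in> T \<and> b \<in> T"
  unfolding heap_rel_def by blast

lemma heap_rel_any_witness:
  assumes "(a, b) \<in> sim" and s: "s \<in> S"
  shows "h a b s \<in> S"
proof -
  obtain s0 where "s0 \<in> S" "h a b s0 \<in> S" "a \<in> T" "b \<in> T"
    using assms unfolding heap_rel_def by blast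
  with s subheap_closed[of "h a b s0" s0 s] subheap_subset show ?thesis
    by (auto simp: subset_iff)
qed

lemma equiv_heap_rel: "equiv T sim"
proof (rule equivI)
  obtain s where s: "s \<in> S" and sT: "s \<in> T"
    using subheap_nonempty subheap_subset by blast
  show "sim \<subseteq> T \<times> T"
    unfolding heap_rel_def by blast
  show "refl_on T sim"
    using s sT by (intro refl_onI heap_relI) auto
  show "sym sim"
  proof (rule symI)
    fix a b assume ab: "(a, b) \<in> sim"
    have "h s (h a b s) s \<in> S"
      using subheap_closed s heap_rel_any_witness[OF ab s] by blast
    with heap_relD[OF ab] s sT show "(b, a) \<in> sim"
      by (intro heap_relI[of b a s]) simp_all
  qed
  show "trans sim"
  proof (rule transI)
    fix a b c assume ab: "(a, b) \<in> sim" and bc: "(b, c) \<in> sim"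
    have "h (h a b s) s (h b c s) \<in> S"
      using subheap_closed s heap_rel_any_witness[OF ab s] heap_rel_any_witness[OF bc s] by blast
    with heap_relD[OF ab] heap_relD[OF bc] s sT show "(a, c) \<in> sim"
      by (intro heap_relI[of a c s]) simp_all
  qed
qed

lemma heap_rel_refl: "a \<in> T \<Longrightarrow> (a, a) \<in> sim"
  using equiv_heap_rel unfolding equiv_def refl_on_def by blast

lemma heap_rel_sym: "(a, b) \<in> sim \<Longrightarrow> (b, a) \<in> sim"
  using equiv_heap_rel unfolding equiv_def by (blast dest: symD)

lemma heap_rel_trans: "(a, b) \<in> sim \<Longrightarrow> (b, c) \<in> sim \<Longrightarrow> (a, c) \<in> sim"
  using equiv_heap_rel unfolding equiv_def by (blast dest: transD)

lemma heap_rel_cancel_right: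
  assumes "(h a b c, c) \<in> sim" "a \<in> T" "b \<in> T"
  shows "(a, b) \<in> sim"
proof -
  obtain s where s: "s \<in> S" and sT: "s \<in> T"
    using subheap_nonempty subheap_subset by blast
  have "h (h a b c) c s \<in> S"
    using heap_rel_any_witness[OF assms(1) s] .
  with assms heap_relD[OF assms(1)] s sT show ?thesis
    by (intro heap_relI[of a b s]) simp_all
qed

lemma heap_rel_cong:
  assumes aa': "(a, a') \<in> sim" and bb': "(b, b') \<in> sim" and cc': "(c, c') \<in> sim"
  shows "(h a b c, h a' b' c') \<in> sim"
proof -
  obtain s where s: "s \<in> S" and sT: "s \<in> T"
    using subheap_nonempty subheap_subset by blast
  note T = heap_relD[OF aa'] heap_relD[OF bb'] heap_relD[OF cc']
  have "h (h (h a b s) s (h c c' s)) (h a b s) s \<in> S"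
    using subheap_normal[of "h a b s" s "h c c' s"] s sT T heap_rel_any_witness[OF cc' s] by simp
  with T s sT have "(h a b c, h a b c') \<in> sim"
    by (intro heap_relI[of _ _ s]) simp_all
  moreover
  have "h (h (h a b s) s (h b' b s)) (h a b s) s \<in> S"
    using subheap_normal[of "h a b s" s "h b' b s"] s sT T
      heap_rel_any_witness[OF heap_rel_sym[OF bb'] s] by simp
  with T s sT have "(h a b c', h a b' c') \<in> sim"
    by (intro heap_relI[of _ _ s]) simp_all
  moreover
  have "h (h a b' c') (h a' b' c') s \<in> S"
    using T sT heap_rel_any_witness[OF aa' s] by simp
  with T s sT have "(h a b' c', h a' b' c') \<in> sim"
    by (intro heap_relI[of _ _ s]) simp_all
  ultimately show ?thesis
    by (blast intro: heap_rel_trans)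
qed

lemma mem_hclass_iff: "b \<in> cls a \<longleftrightarrow> (a, b) \<in> sim"
  unfolding hclass_def by blast

lemma hclass_eq_iff: "a \<in> T \<Longrightarrow> b \<in> T \<Longrightarrow> cls a = cls b \<longleftrightarrow> (a, b) \<in> sim"
  unfolding hclass_def using eq_equiv_class_iff[OF equiv_heap_rel] by blast

lemma heap_rel_qrep:
  assumes "a \<in> T"
  shows "(qrep (cls a), a) \<in> sim"
proof -
  have "a \<in> cls a"
    using assms by (simp add: mem_hclass_iff heap_rel_refl)
  then have "qrep (cls a) \<in> cls a"
    unfolding qrep_def by (rule someI)
  then show ?thesis
    unfolding mem_hclass_iff by (rule heap_rel_sym)
qed

lemma qheap_hclass:
  assumes "a \<in> T" "b \<in> T" "c \<in> T"
  shows "qheap T h S (cls a) (cls b) (cls c) = cls (h a b c)"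
proof -
  have "(h (qrep (cls a)) (qrep (cls b)) (qrep (cls c)), h a b c) \<in> sim"
    using assms by (intro heap_rel_cong heap_rel_qrep)
  then show ?thesis
    unfolding qheap_def using hclass_eq_iff heap_relD by blast
qed

lemma qcarrier_eq_image: "qcarrier T h S = cls ` T"
  unfolding qcarrier_def quotient_def hclass_def by blast

lemma image_hclass_hclass:
  assumes "x \<in> T"
  shows "cls ` cls x = {cls x}"
proof -
  have "cls y = cls x" if "y \<in> cls x" for y
    using that hclass_eq_iff heap_relD heap_rel_sym unfolding mem_hclass_iff by blast
  moreover have "x \<in> cls x"
    using assms by (simp add: mem_hclass_iff heap_rel_refl)
  ultimately show ?thesis
    by blast
qed

end

locale near_truss_carrier =
  fixes T :: "'a set" and h :: "'a \<Rightarrow> 'a \<Rightarrow> 'a \<Rightarrow> 'a" and m :: "'a \<Rightarrow> 'a \<Rightarrow> 'a"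
  assumes near_truss: "near_truss T h m"
begin

sublocale heap_carrier T h
  using near_truss by unfold_locales (simp add: near_truss_def)

lemma mult_closed [simp]: "a \<in> T \<Longrightarrow> b \<in> T \<Longrightarrow> m a b \<in> T"
  using near_truss unfolding near_truss_def by blast

lemma mult_heap_distrib:
  "a \<in> T \<Longrightarrow> b \<in> T \<Longrightarrow> c \<in> T \<Longrightarrow> d \<in> T \<Longrightarrow> m a (h b c d) = h (m a b) (m a c) (m a d)"
  using near_truss unfolding near_truss_def by blast

lemma left_ideal_translate:
  assumes K: "left_ideal T h m K" and x: "x \<in> K" and e: "e \<in> T"
    and translate_mult: "\<And>t. t \<in> T \<Longrightarrow> h (m t e) e x \<in> K"
  shows "left_ideal T h m {t \<in> T. h t e x \<in> K}"
  unfolding left_ideal_def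
proof (intro conjI ballI)
  have K_normal: "normal_subheap T h K" and K_mult: "\<And>t a. t \<in> T \<Longrightarrow> a \<in> K \<Longrightarrow> m t a \<in> K"
    using K unfolding left_ideal_def by blast+
  then have K_closed: "\<And>a b c. a \<in> K \<Longrightarrow> b \<in> K \<Longrightarrow> c \<in> K \<Longrightarrow> h a b c \<in> K"
    and "K \<subseteq> T"
    unfolding normal_subheap_def subheap_def by blast+
  with x have xT: "x \<in> T"
    by blast
  show "normal_subheap T h {t \<in> T. h t e x \<in> K}"
    using normal_subheap_translate[OF K_normal x e] .
  fix t n assume t: "t \<in> T" and "n \<in> {t \<in> T. h t e x \<in> K}"
  then have n: "n \<in> T" "h n e x \<in> K"
    by simp_all
  have "m t (h n e x) \<in> K"
    using K_mult[OF t n(2)] .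
  then have "h (m t n) (m t e) (m t x) \<in> K"
    using t n e xT by (simp add: mult_heap_distrib)
  then have "h (h (m t n) (m t e) (m t x)) (m t x) (h (m t e) e x) \<in> K"
    using K_closed K_mult[OF t x] translate_mult[OF t] by blast
  with t n e xT show "m t n \<in> {t \<in> T. h t e x \<in> K}"
    by simp
qed

lemma saturated_left_ideal_cases:
  assumes P: "maximal_left_ideal T h m P"
    and K: "left_ideal T h m K" and saturated: "\<And>a. a \<in> K \<Longrightarrow> hclass T h P a \<subseteq> K"
    and x: "x \<in> K"
  shows "K = hclass T h P x \<or> K = T"
proof -
  have P_left: "left_ideal T h m P"
    and P_max: "\<And>L. left_ideal T h m L \<Longrightarrow> P \<subseteq> L \<Longrightarrow> L = P \<or> L = T"
    using P unfolding maximal_left_ideal_def by blast+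
  interpret normal_subheap_in T h P
    by unfold_locales (use P_left in \<open>simp add: left_ideal_def\<close>)
  have "K \<subseteq> T"
    using K unfolding left_ideal_def normal_subheap_def subheap_def by blast
  with x have xT: "x \<in> T"
    by blast
  obtain e where e: "e \<in> P" and eT: "e \<in> T"
    using subheap_nonempty subheap_subset by blast
  define N where "N = {t \<in> T. h t e x \<in> K}"
  have P_in_N: "P \<subseteq> N"
  proof
    fix i assume i: "i \<in> P"
    with subheap_subset have iT: "i \<in> T"
      by blast
    have "h x (h i e x) e \<in> P"
      using subheap_closed[OF e i e] iT eT xT by simp
    with iT eT xT e have "h i e x \<in> cls x"
      by (simp add: mem_hclass_iff heap_relI)
    with saturated x iT show "i \<in> N"
      unfolding N_def by blast
  qed
  have "left_ideal T h m N"
    unfolding N_def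
  proof (rule left_ideal_translate[OF K x eT])
    fix t assume "t \<in> T"
    with P_left e have "m t e \<in> N"
      using P_in_N unfolding left_ideal_def by blast
    then show "h (m t e) e x \<in> K"
      unfolding N_def by blast
  qed
  from P_max[OF this P_in_N] show ?thesis
  proof
    assume "N = P"
    have "K \<subseteq> cls x"
    proof
      fix a assume a: "a \<in> K"
      with \<open>K \<subseteq> T\<close> have aT: "a \<in> T"
        by blast
      with a xT eT have "h a x e \<in> N"
        unfolding N_def by simp
      with \<open>N = P\<close> aT xT e eT have "(a, x) \<in> sim"
        by (intro heap_relI[of a x e]) simp_all
      then show "a \<in> cls x"
        unfolding mem_hclass_iff by (rule heap_rel_sym)
    qed
    with saturated x show ?thesis
      by blast
  next
    assume "N = T"
    have "T \<subseteq> K"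
    proof
      fix t assume t: "t \<in> T"
      with \<open>N = T\<close> xT eT have "h t x e \<in> N"
        by simp
      with t xT eT show "t \<in> K"
        unfolding N_def by simp
    qed
    with \<open>K \<subseteq> T\<close> show ?thesis
      by blast
  qed
qed

end

locale paragon_in = near_truss_carrier +
  fixes P :: "'a set"
  assumes paragon: "paragon T h m P"
begin

sublocale normal_subheap_in T h P
  by unfold_locales (use paragon in \<open>simp add: paragon_def\<close>)

lemma hclass_closed:
  assumes "x \<in> T" "u \<in> cls x" "u' \<in> cls x" "t \<in> T"
  shows "h (m t u') (m t u) u \<in> cls x" and "h (m u' t) (m u t) u \<in> cls x"
proof -
  have "closed_subheap T h m (cls x)"
    using paragon assms(1) unfolding paragon_def by blast
  then show "h (m t u') (m t u) u \<in> cls x" and "h (m u' t) (m u t) u \<in> cls x"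
    using assms(2-4) unfolding closed_subheap_def by blast+
qed

lemma heap_rel_mult_cong:
  assumes aa': "(a, a') \<in> sim" and bb': "(b, b') \<in> sim"
  shows "(m a b, m a' b') \<in> sim"
proof -
  have T: "a \<in> T" "a' \<in> T" "b \<in> T" "b' \<in> T"
    using heap_relD[OF aa'] heap_relD[OF bb'] by simp_all
  have "(b, h (m a' b') (m a' b) b) \<in> sim"
    using hclass_closed(1)[of b b b' a'] bb' T heap_rel_refl[of b] unfolding mem_hclass_iff by blast
  then have "(m a' b', m a' b) \<in> sim"
    by (rule heap_rel_cancel_right[OF heap_rel_sym]) (use T in simp_all)
  moreover have "(a, h (m a' b) (m a b) a) \<in> sim"
    using hclass_closed(2)[of a a a' b] aa' T heap_rel_refl[of a] unfolding mem_hclass_iff by blast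
  then have "(m a' b, m a b) \<in> sim"
    by (rule heap_rel_cancel_right[OF heap_rel_sym]) (use T in simp_all)
  ultimately show ?thesis
    using heap_rel_sym heap_rel_trans by blast
qed

lemma qmult_hclass:
  assumes "a \<in> T" "b \<in> T"
  shows "qmult T h m P (cls a) (cls b) = cls (m a b)"
proof -
  have "(m (qrep (cls a)) (qrep (cls b)), m a b) \<in> sim"
    using assms by (intro heap_rel_mult_cong heap_rel_qrep)
  then show ?thesis
    unfolding qmult_def using hclass_eq_iff heap_relD by blast
qed

lemma left_ideal_preimage:
  assumes J: "left_ideal (qcarrier T h P) (qheap T h P) (qmult T h m P) J"
  shows "left_ideal T h m {a \<in> T. cls a \<in> J}"
proof -
  have J_nonempty: "J \<noteq> {}" and J_sub: "J \<subseteq> cls ` T"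
    and J_closed: "\<And>A B C. A \<in> J \<Longrightarrow> B \<in> J \<Longrightarrow> C \<in> J \<Longrightarrow> qheap T h P A B C \<in> J"
    and J_normal: "\<And>A B C. A \<in> cls ` T \<Longrightarrow> B \<in> J \<Longrightarrow> C \<in> J \<Longrightarrow>
      qheap T h P (qheap T h P A B C) A B \<in> J"
    and J_mult: "\<And>A B. A \<in> cls ` T \<Longrightarrow> B \<in> J \<Longrightarrow> qmult T h m P A B \<in> J"
    using J unfolding left_ideal_def normal_subheap_def subheap_def qcarrier_eq_image
    by (meson, meson, meson, meson, meson)
  show ?thesis
    unfolding left_ideal_def normal_subheap_def subheap_def
  proof (intro conjI ballI)
    show "{a \<in> T. cls a \<in> J} \<noteq> {}"
      using J_nonempty J_sub by blast
  next
    fix a b c assume "a \<in> {a \<in> T. cls a \<in> J}" "b \<in> {a \<in> T. cls a \<in> J}" "c \<in> {a \<in> T. cls a \<in> J}"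
    with J_closed[of "cls a" "cls b" "cls c"] show "h a b c \<in> {a \<in> T. cls a \<in> J}"
      by (simp add: qheap_hclass)
  next
    fix t a b assume "t \<in> T" "a \<in> {a \<in> T. cls a \<in> J}" "b \<in> {a \<in> T. cls a \<in> J}"
    with J_normal[of "cls t" "cls a" "cls b"] show "h (h t a b) t a \<in> {a \<in> T. cls a \<in> J}"
      by (simp add: qheap_hclass)
  next
    fix t a assume "t \<in> T" "a \<in> {a \<in> T. cls a \<in> J}"
    with J_mult[of "cls t" "cls a"] show "m t a \<in> {a \<in> T. cls a \<in> J}"
      by (simp add: qmult_hclass)
  qed auto
qed

lemma preimage_saturated:
  assumes "a \<in> {a \<in> T. cls a \<in> J}"
  shows "cls a \<subseteq> {a \<in> T. cls a \<in> J}"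
proof
  fix b assume "b \<in> cls a"
  then have "(a, b) \<in> sim"
    by (simp add: mem_hclass_iff)
  then have "cls a = cls b" and "b \<in> T"
    using hclass_eq_iff heap_relD by blast+
  with assms show "b \<in> {a \<in> T. cls a \<in> J}"
    by simp
qed

lemma image_preimage_hclass: "J \<subseteq> qcarrier T h P \<Longrightarrow> cls ` {a \<in> T. cls a \<in> J} = J"
  unfolding qcarrier_eq_image by blast

lemma quotient_left_ideal_trivial:
  assumes P: "maximal_left_ideal T h m P"
    and J: "left_ideal (qcarrier T h P) (qheap T h P) (qmult T h m P) J"
  shows "(\<exists>y. J = {y}) \<or> J = qcarrier T h P"
proof -
  have J_sub: "J \<subseteq> qcarrier T h P" and "J \<noteq> {}"
    using J unfolding left_ideal_def normal_subheap_def subheap_def by blast+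
  define K where "K = {a \<in> T. cls a \<in> J}"
  have K: "left_ideal T h m K"
    unfolding K_def using left_ideal_preimage[OF J] .
  have saturated: "\<And>a. a \<in> K \<Longrightarrow> cls a \<subseteq> K"
    unfolding K_def by (rule preimage_saturated)
  obtain x where x: "x \<in> K" and xT: "x \<in> T"
    using \<open>J \<noteq> {}\<close> J_sub unfolding K_def qcarrier_eq_image by blast
  have "K = cls x \<or> K = T"
    using saturated_left_ideal_cases[OF P K saturated x] .
  moreover have "J = cls ` K"
    unfolding K_def using image_preimage_hclass[OF J_sub] by simp
  ultimately show ?thesis
    using image_hclass_hclass[OF xT] qcarrier_eq_image by auto
qed

end

theorem lemma3p23:
  fixes T :: "'a set" and h :: "'a \<Rightarrow> 'a \<Rightarrow> 'a \<Rightarrow> 'a" and m :: "'a \<Rightarrow> 'a \<Rightarrow> 'a"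
    and I :: "'a set"
  assumes "near_truss T h m"
    and "paragon T h m I"
    and "maximal_left_ideal T h m I"
  shows "\<forall>J. ideal (qcarrier T h I) (qheap T h I) (qmult T h m I) J \<longrightarrow>
           (\<exists>x. J = {x}) \<or> J = qcarrier T h I"
proof (intro allI impI)
  interpret paragon_in T h m I
    using assms(1,2) by unfold_locales
  fix J
  assume "ideal (qcarrier T h I) (qheap T h I) (qmult T h m I) J"
  then have "left_ideal (qcarrier T h I) (qheap T h I) (qmult T h m I) J"
    unfolding ideal_def by blast
  then show "(\<exists>x. J = {x}) \<or> J = qcarrier T h I"
    by (rule quotient_left_ideal_trivial[OF assms(3)])
qed

end
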